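(* Let $1\le p<2$, $f\in\mathcal H_0$, $u$ the solution of $\partial_tu+\partial J(u)\ni0$, $u(0)=f$, with extinction time $T_{\mathrm{ex}}$, and $w(t):=u(t)/a(t)$ with $a(t)=(1-t/T_{\mathrm{ex}})^{1/(2-p)}$, $0\le t<T_{\mathrm{ex}}$. Assume $T_{\mathrm{ex}}=\frac{\|f\|^{2-p}}{(2-p)\lambda_1}$ and that an asymptotic profile exists, i.e. there are $w_*\in\mathcal H$ and $t_k\nearrow T_{\mathrm{ex}}$ with $w(t_k)\to w_*$ strongly. Then $\Lambda(t)=\lambda_1$ for all $0\le t<T_{\mathrm{ex}}$, and hence $f$ is a ground state.
   Context: $\mathcal H$ is a real Hilbert space with inner product $\langle\cdot,\cdot\rangle$ and norm $\|\cdot\|$. $J:\mathcal H\to\mathbb R\cup\{\infty\}$ is convex, lower semicontinuous, proper, with dense effective domain, and absolutely $p$-homogeneous: $J(cu)=|c|^pJ(u)$ for $c\ne0$, $J(0)=0$. $\partial J(u)=\{\zeta: J(u)+\langle\zeta,v-u\rangle\le J(v)\ \forall v\}$; $\mathcal N(J)=\{u:J(u)=0\}$; $\mathcal H_0:=\mathcal N(J)^\perp\setminus\{0\}$. Rayleigh quotient $R(u):=pJ(u)/\|u\|^p$; standing coercivity assumption $\lambda_1:=\inf_{u\in\mathcal H_0}R(u)>0$; a ground state is a minimizer of $R$ over $\mathcal H_0$. The gradient flow solution (Brezis) is the unique continuous $u:[0,\infty)\to\mathcal H$, Lipschitz on $[\delta,\infty)$ for all $\delta>0$, right-differentiable on $(0,\infty)$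 with $u(0)=f$ and $\partial_t^+u(t)=-\zeta(t)$, $\zeta(t)$ the minimal-norm element of $\partial J(u(t))$. $T_{\mathrm{ex}}:=\inf\{T>0:u(t)=0\ \forall t\ge T\}$. $\Lambda(t):=R(u(t))$ for $0\le t<T_{\mathrm{ex}}$. *)

theory Defs
  imports "HOL-Analysis.Analysis" "HOL-Library.Extended_Real"
begin

text \<open>Functional J on a real Hilbert space, with values in R \<union> {\<infinity>} (as ereal, never -\<infinity>).\<close>

definition convex_fun :: "('a::real_vector \<Rightarrow> ereal) \<Rightarrow> bool" where
  "convex_fun J \<longleftrightarrow> (\<forall>x y. \<forall>t::real. 0 \<le> t \<and> t \<le> 1 \<longrightarrow>
      J ((1 - t) *\<^sub>R x + t *\<^sub>R y) \<le> ereal (1 - t) * J x + ereal t * J y)"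

definition lsc_fun :: "('a::topological_space \<Rightarrow> ereal) \<Rightarrow> bool" where
  "lsc_fun J \<longleftrightarrow> (\<forall>c. closed {u. J u \<le> c})"

definition proper_fun :: "('a \<Rightarrow> ereal) \<Rightarrow> bool" where
  "proper_fun J \<longleftrightarrow> (\<forall>u. J u \<noteq> -\<infinity>) \<and> (\<exists>u. J u \<noteq> \<infinity>)"

definition eff_dom :: "('a \<Rightarrow> ereal) \<Rightarrow> 'a set" where
  "eff_dom J = {u. J u < \<infinity>}"

definition abs_homogeneous :: "real \<Rightarrow> ('a::real_vector \<Rightarrow> ereal) \<Rightarrow> bool" where
  "abs_homogeneous p J \<longleftrightarrow> J 0 = 0 \<and>
      (\<forall>c u. c \<noteq> 0 \<longrightarrow> J (c *\<^sub>R u) = ereal (\<bar>c\<bar> powr p) * J u)"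

definition admissible_J :: "real \<Rightarrow> ('a::{real_inner,complete_space} \<Rightarrow> ereal) \<Rightarrow> bool" where
  "admissible_J p J \<longleftrightarrow> convex_fun J \<and> lsc_fun J \<and> proper_fun J \<and>
      closure (eff_dom J) = UNIV \<and> abs_homogeneous p J"

definition subdiff :: "('a::real_inner \<Rightarrow> ereal) \<Rightarrow> 'a \<Rightarrow> 'a set" where
  "subdiff J u = {\<zeta>. \<forall>v. J u + ereal (inner \<zeta> (v - u)) \<le> J v}"

definition null_set :: "('a \<Rightarrow> ereal) \<Rightarrow> 'a set" where
  "null_set J = {u. J u = 0}"

definition H0 :: "('a::real_inner \<Rightarrow> ereal) \<Rightarrow> 'a set" where
  "H0 J = {u. \<forall>v \<in> null_set J. inner u v = 0} - {0}"

definition rayleigh :: "real \<Rightarrow> ('a::real_normed_vector \<Rightarrow> ereal) \<Rightarrow> 'a \<Rightarrow> ereal" where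
  "rayleigh p J u = ereal p * J u / ereal (norm u powr p)"

definition lambda1 :: "real \<Rightarrow> ('a::real_inner \<Rightarrow> ereal) \<Rightarrow> ereal" where
  "lambda1 p J = (INF u \<in> H0 J. rayleigh p J u)"

definition ground_state :: "real \<Rightarrow> ('a::real_inner \<Rightarrow> ereal) \<Rightarrow> 'a \<Rightarrow> bool" where
  "ground_state p J u \<longleftrightarrow> u \<in> H0 J \<and> (\<forall>v \<in> H0 J. rayleigh p J u \<le> rayleigh p J v)"

text \<open>Brezis gradient-flow solution of  u' + \<partial>J(u) \<ni> 0, u(0) = f.\<close>
definition gradient_flow :: "('a::{real_inner,complete_space} \<Rightarrow> ereal) \<Rightarrow> 'a \<Rightarrow> (real \<Rightarrow> 'a) \<Rightarrow> bool" where
  "gradient_flow J f u \<longleftrightarrow>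
     continuous_on {0..} u \<and>
     (\<forall>\<delta>>0. \<exists>C. C-lipschitz_on {\<delta>..} u) \<and>
     u 0 = f \<and>
     (\<forall>t>0. \<exists>\<zeta>. \<zeta> \<in> subdiff J (u t) \<and> (\<forall>\<eta> \<in> subdiff J (u t). norm \<zeta> \<le> norm \<eta>) \<and>
              (u has_vector_derivative (- \<zeta>)) (at_right t))"

text \<open>Extinction time, as an extended real (\<infinity> if u never vanishes identically).\<close>
definition extinction_time :: "(real \<Rightarrow> 'a::zero) \<Rightarrow> ereal" where
  "extinction_time u = (INF T \<in> {T. T > 0 \<and> (\<forall>t\<ge>T. u t = 0)}. ereal T)"

end

theory Submission
  imports Defs
begin

(* Along the flow, d/dt |u|^2 = -2 <zeta, u> = -2 p J(u) by Euler's identity for p-homogeneous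
   functionals, while orthogonality to the null set of J and non-vanishing before the extinction
   time are preserved, so u(t) stays in H0 and Lambda(t) >= lambda1.  Hence
   psi(t) = |u(t)|^(2-p) + (2-p) lambda1 t has right derivative (2-p) (lambda1 - Lambda(t)) <= 0.
   Since psi(0) = |f|^(2-p) and psi(T_ex) = (2-p) lambda1 T_ex, the hypothesis on T_ex says
   psi(T_ex) = psi(0): psi is constant, its derivative vanishes and Lambda = lambda1 on (0, T_ex).
   Lower semicontinuity of J carries this to t = 0, so f is a ground state. *)

lemma right_deriv_nonpos_imp_le_Ico:
  fixes g :: "real \<Rightarrow> real"
  assumes "a \<le> b" and cont: "continuous_on {a..b} g"
    and der: "\<And>t. a \<le> t \<Longrightarrow> t < b \<Longrightarrow> \<exists>D. (g has_real_derivative D) (at_right t) \<and> D \<le> 0"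
  shows "g b \<le> g a"
proof (rule field_le_epsilon)
  fix e :: real assume "e > 0"
  define k where "k = e / (b - a + 1)"
  have "k > 0" using \<open>e > 0\<close> \<open>a \<le> b\<close> by (simp add: k_def)
  define S where "S = {a..b} \<inter> (\<lambda>t. g t - k * (t - a)) -` {..g a}"
  have "closed S" unfolding S_def
    by (intro continuous_closed_preimage continuous_intros cont closed_atLeastAtMost closed_atMost)
  moreover have "a \<in> S" using \<open>a \<le> b\<close> by (simp add: S_def)
  moreover have "bdd_above S" by (auto simp: S_def bdd_above_def)
  ultimately have c: "Sup S \<in> S" by (intro closed_contains_Sup) auto
  define c where "c = Sup S"
  have "c = b"
  proof (rule ccontr)
    assume "c \<noteq> b"
    then have "a \<le> c" "c < b" using c by (auto simp: S_def c_def)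
    then obtain D where "(g has_real_derivative D) (at_right c)" "D < k"
      using der \<open>k > 0\<close> by fastforce
    then have "\<forall>\<^sub>F s in at_right c. (g s - g c) / (s - c) < k"
      by (intro order_tendstoD(2)) (auto simp: has_field_derivative_iff)
    moreover have "\<forall>\<^sub>F s in at_right c. c < s \<and> s < b"
      using \<open>c < b\<close> eventually_at_right_field by blast
    ultimately obtain s where s: "c < s" "s < b" "(g s - g c) / (s - c) < k"
      using eventually_happens[OF eventually_conj] by fastforce
    then have "s \<in> S" using c \<open>a \<le> c\<close> by (auto simp: S_def c_def field_simps)
    then have "s \<le> c" unfolding c_def using \<open>bdd_above S\<close> by (rule cSup_upper)
    then show False using \<open>c < s\<close> by simp
  qed
  then have "g b \<le> g a + k * (b - a)" using c by (simp add: S_def c_def)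
  also have "k * (b - a) \<le> e"
    using \<open>e > 0\<close> \<open>a \<le> b\<close> by (simp add: k_def field_simps)
  finally show "g b \<le> g a + e" by simp
qed

lemma right_deriv_nonpos_imp_le:
  fixes g :: "real \<Rightarrow> real"
  assumes "a \<le> b" and cont: "continuous_on {a..b} g"
    and der: "\<And>t. a < t \<Longrightarrow> t < b \<Longrightarrow> \<exists>D. (g has_real_derivative D) (at_right t) \<and> D \<le> 0"
  shows "g b \<le> g a"
proof (cases "a = b")
  case False
  then have "a < b" using \<open>a \<le> b\<close> by simp
  have "(g \<longlongrightarrow> g a) (at_right a)"
    using cont \<open>a < b\<close> by (rule continuous_on_Icc_at_rightD)
  moreover have "\<forall>\<^sub>F x in at_right a. g b \<le> g x"
    unfolding eventually_at_right_field
  proof (intro exI[of _ b] conjI allI impI)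
    fix x assume "a < x" "x < b"
    show "g b \<le> g x"
    proof (rule right_deriv_nonpos_imp_le_Ico[where g = g])
      show "continuous_on {x..b} g"
        using \<open>a < x\<close> by (auto intro: continuous_on_subset[OF cont])
    qed (use \<open>a < x\<close> \<open>x < b\<close> der in auto)
  qed (fact \<open>a < b\<close>)
  ultimately show ?thesis by (rule tendsto_lowerbound) simp
qed simp

lemma right_deriv_eventually_const:
  fixes g :: "real \<Rightarrow> real"
  assumes "(g has_real_derivative D) (at_right t)" "\<forall>\<^sub>F s in at_right t. g s = g t"
  shows "D = 0"
proof -
  have "((\<lambda>s. (g s - g t) / (s - t)) \<longlongrightarrow> D) (at_right t)"
    using assms(1) by (simp add: has_field_derivative_iff)
  moreover have "((\<lambda>s. (g s - g t) / (s - t)) \<longlongrightarrow> 0) (at_right t)"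
    using assms(2) by (rule tendsto_eventually[OF eventually_mono]) simp
  ultimately show ?thesis by (rule tendsto_unique[rotated]) simp
qed

lemma power2_powr_half: "0 \<le> (x::real) \<Longrightarrow> x\<^sup>2 powr (a / 2) = x powr a"
  by (cases "x = 0") (simp_all add: powr_powr flip: powr_numeral)

lemma abs_homogeneous_uminus:
  assumes "abs_homogeneous p J"
  shows "J (- x) = J x"
proof -
  have "J ((- 1) *\<^sub>R x) = ereal (\<bar>- 1\<bar> powr p) * J x"
    using assms unfolding abs_homogeneous_def by (metis neg_one_neq_zero)
  then show ?thesis by simp
qed

lemma convex_fun_midpoint:
  assumes "convex_fun J"
  shows "J ((1/2) *\<^sub>R (x + y)) \<le> ereal (1/2) * J x + ereal (1/2) * J y"
  using assms[unfolded convex_fun_def, rule_format, of "1/2" x y]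
  by (simp add: scaleR_right_distrib)

lemma convex_fun_abs_homogeneous_nonneg:
  assumes "convex_fun J" "abs_homogeneous p J" "J x \<noteq> -\<infinity>"
  shows "0 \<le> J x"
proof -
  have "J 0 \<le> ereal (1/2) * J x + ereal (1/2) * J (- x)"
    using convex_fun_midpoint[OF assms(1), of x "- x"] by simp
  then have "0 \<le> ereal (1/2) * J x + ereal (1/2) * J x"
    using assms(2) abs_homogeneous_uminus[OF assms(2)] by (simp add: abs_homogeneous_def)
  then show ?thesis using assms(3) by (cases "J x") auto
qed

lemma subdiff_imp_finite:
  assumes "proper_fun J" "z \<in> subdiff J x"
  shows "\<bar>J x\<bar> \<noteq> \<infinity>"
proof -
  obtain v where "J v \<noteq> \<infinity>" using assms(1) by (auto simp: proper_fun_def)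
  moreover have "J x + ereal (inner z (v - x)) \<le> J v" using assms(2) by (simp add: subdiff_def)
  moreover have "J x \<noteq> -\<infinity>" using assms(1) by (simp add: proper_fun_def)
  ultimately show ?thesis by (cases "J x") auto
qed

lemma subdiff_inner_self_ge:
  assumes "J 0 = 0" "z \<in> subdiff J x"
  shows "J x \<le> ereal (inner z x)"
proof -
  have "J x + ereal (inner z (0 - x)) \<le> J 0" using assms(2) unfolding subdiff_def by blast
  then show ?thesis using assms(1) by (cases "J x") auto
qed

text \<open>Euler's identity for homogeneous functionals: along the ray through x the subgradient
  inequality says that c \<mapsto> c powr p * j - (c - 1) * \<langle>z, x\<rangle> is minimal at c = 1.\<close>
lemma subdiff_inner_self_eq:
  assumes "abs_homogeneous p J" "z \<in> subdiff J x" "J x = ereal j"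
  shows "inner z x = p * j"
proof -
  define \<phi> where "\<phi> c = c powr p * j - (c - 1) * inner z x" for c
  have min: "\<forall>c. \<bar>1 - c\<bar> < 1 \<longrightarrow> \<phi> 1 \<le> \<phi> c"
  proof (intro allI impI)
    fix c :: real assume "\<bar>1 - c\<bar> < 1"
    then have "c \<noteq> 0" "\<bar>c\<bar> = c" by auto
    have "J x + ereal (inner z (c *\<^sub>R x - x)) \<le> J (c *\<^sub>R x)"
      using assms(2) by (simp add: subdiff_def)
    then show "\<phi> 1 \<le> \<phi> c"
      using assms(1,3) \<open>c \<noteq> 0\<close> \<open>\<bar>c\<bar> = c\<close>
      by (simp add: \<phi>_def abs_homogeneous_def inner_diff_right algebra_simps)
  qed
  have "(\<phi> has_real_derivative p * 1 powr (p - 1) * j - inner z x) (at 1)"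
    unfolding \<phi>_def by (auto intro!: derivative_eq_intros)
  from DERIV_local_min[OF this zero_less_one min] show ?thesis by simp
qed

text \<open>By convexity and homogeneity J (x + c v) \<le> 2 powr p * J x / 2 for every c, while the
  subgradient inequality bounds it below by J x + c \<langle>z, v\<rangle>.\<close>
lemma subdiff_orthogonal_null_set:
  assumes "convex_fun J" "abs_homogeneous p J" "z \<in> subdiff J x" "J x = ereal j"
    and "v \<in> null_set J"
  shows "inner z v = 0"
proof (rule ccontr)
  assume "inner z v \<noteq> 0"
  define B where "B = 2 powr p * j / 2"
  have bound: "j + c * inner z v \<le> B" for c
  proof -
    have "J (2 *\<^sub>R x) = ereal (2 powr p * j)" "J ((2 * c) *\<^sub>R v) = 0"
      using assms(2,4,5) by (auto simp: abs_homogeneous_def null_set_def) (cases "c = 0", auto)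
    then have "J (x + c *\<^sub>R v) \<le> ereal B"
      using convex_fun_midpoint[OF assms(1), of "2 *\<^sub>R x" "(2 * c) *\<^sub>R v"]
      by (simp add: B_def scaleR_right_distrib)
    moreover have "J x + ereal (inner z (x + c *\<^sub>R v - x)) \<le> J (x + c *\<^sub>R v)"
      using assms(3) unfolding subdiff_def by blast
    then have "ereal (j + c * inner z v) \<le> J (x + c *\<^sub>R v)"
      using assms(4) by simp
    ultimately show ?thesis by (metis ereal_less_eq(3) order.trans)
  qed
  have "j + ((\<bar>B - j\<bar> + 1) / inner z v) * inner z v \<le> B" by (rule bound)
  then show False using \<open>inner z v \<noteq> 0\<close> by simp
qed

lemma lambda1_le_rayleigh:
  assumes "x \<in> H0 J"
  shows "lambda1 p J \<le> rayleigh p J x"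
  unfolding lambda1_def using assms by (rule INF_lower)

lemma lsc_fun_le_limit:
  assumes "lsc_fun J" "F \<noteq> bot" "(x \<longlongrightarrow> a) F" "(c \<longlongrightarrow> m) F"
    and "\<forall>\<^sub>F s in F. J (x s) \<le> ereal (c s)"
  shows "J a \<le> ereal m"
proof (rule ereal_le_epsilon2)
  fix e :: real assume "e > 0"
  have "\<forall>\<^sub>F s in F. c s < m + e"
    using assms(4) \<open>e > 0\<close> by (intro order_tendstoD(2)) auto
  with assms(5) have "\<forall>\<^sub>F s in F. x s \<in> {y. J y \<le> ereal (m + e)}"
    by eventually_elim (auto intro: order_trans)
  from Lim_in_closed_set[OF _ this assms(2,3)] assms(1) show "J a \<le> ereal m + ereal e"
    by (simp add: lsc_fun_def)
qed

lemma extinction_time_nonneg: "0 \<le> extinction_time u"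
  unfolding extinction_time_def by (rule INF_greatest) auto

locale brezis_flow =
  fixes p :: real and J :: "'a::{real_inner,complete_space} \<Rightarrow> ereal"
    and f :: 'a and u :: "real \<Rightarrow> 'a"
  assumes admissible: "admissible_J p J" and flow: "gradient_flow J f u"
begin

lemma flow_continuous: "continuous_on {0..} u"
  and flow_initial: "u 0 = f"
  using flow by (simp_all add: gradient_flow_def)

lemma J_convex: "convex_fun J"
  and J_lsc: "lsc_fun J"
  and J_proper: "proper_fun J"
  and J_homogeneous: "abs_homogeneous p J"
  using admissible by (simp_all add: admissible_J_def)

lemma J_zero: "J 0 = 0"
  using J_homogeneous by (simp add: abs_homogeneous_def)

lemma J_uminus: "J (- x) = J x"
  using J_homogeneous by (rule abs_homogeneous_uminus)

lemma J_nonneg: "0 \<le> J x"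
  using J_convex J_homogeneous
  by (rule convex_fun_abs_homogeneous_nonneg) (use J_proper in \<open>simp add: proper_fun_def\<close>)

definition subgrad :: "real \<Rightarrow> 'a" where
  "subgrad t = (SOME z. z \<in> subdiff J (u t) \<and> (u has_vector_derivative - z) (at_right t))"

lemma subgrad:
  assumes "0 < t"
  shows "subgrad t \<in> subdiff J (u t)" and "(u has_vector_derivative - subgrad t) (at_right t)"
proof -
  have "\<exists>z. z \<in> subdiff J (u t) \<and> (u has_vector_derivative - z) (at_right t)"
    using flow assms unfolding gradient_flow_def by blast
  from someI_ex[OF this] show "subgrad t \<in> subdiff J (u t)"
    and "(u has_vector_derivative - subgrad t) (at_right t)"
    unfolding subgrad_def by blast+
qed

definition energy :: "real \<Rightarrow> real" where
  "energy t = real_of_ereal (J (u t))"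

lemma J_flow_eq_energy:
  assumes "0 < t"
  shows "J (u t) = ereal (energy t)"
  using subdiff_imp_finite[OF J_proper subgrad(1)[OF assms]] by (simp add: energy_def ereal_real)

lemma inner_subgrad_flow:
  assumes "0 < t"
  shows "inner (subgrad t) (u t) = p * energy t"
  using J_homogeneous subgrad(1)[OF assms] J_flow_eq_energy[OF assms] by (rule subdiff_inner_self_eq)

lemma inner_subgrad_flow_nonneg:
  assumes "0 < t"
  shows "0 \<le> inner (subgrad t) (u t)"
proof -
  have "J (u t) \<le> ereal (inner (subgrad t) (u t))"
    using J_zero subgrad(1)[OF assms] by (rule subdiff_inner_self_ge)
  then show ?thesis using J_nonneg[of "u t"] by (metis ereal_less_eq(5) order_trans)
qed

lemma norm_sq_flow_right_deriv:
  assumes "0 < t"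
  shows "((\<lambda>s. (norm (u s))\<^sup>2) has_real_derivative - 2 * inner (subgrad t) (u t)) (at_right t)"
proof -
  have "(u has_derivative (\<lambda>h. h *\<^sub>R - subgrad t)) (at_right t)"
    using subgrad(2)[OF assms] by (simp add: has_vector_derivative_def)
  from has_derivative_inner[OF this this] show ?thesis
    unfolding has_field_derivative_def power2_norm_eq_inner
    by (rule has_derivative_eq_rhs) (auto simp: inner_commute algebra_simps)
qed

lemma inner_flow_right_deriv:
  assumes "0 < t"
  shows "((\<lambda>s. inner (u s) v) has_real_derivative - inner (subgrad t) v) (at_right t)"
proof -
  have "(u has_derivative (\<lambda>h. h *\<^sub>R - subgrad t)) (at_right t)"
    using subgrad(2)[OF assms] by (simp add: has_vector_derivative_def)
  from has_derivative_inner_left[OF this] show ?thesis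
    unfolding has_field_derivative_def
    by (rule has_derivative_eq_rhs) (auto simp: algebra_simps)
qed

lemma norm_flow_antimono:
  assumes "0 \<le> s" "s \<le> t"
  shows "norm (u t) \<le> norm (u s)"
proof -
  have "continuous_on {s..t} u"
    using flow_continuous by (rule continuous_on_subset) (use assms in auto)
  then have "continuous_on {s..t} (\<lambda>s. (norm (u s))\<^sup>2)"
    by (intro continuous_intros)
  then have "(norm (u t))\<^sup>2 \<le> (norm (u s))\<^sup>2"
  proof (rule right_deriv_nonpos_imp_le[OF \<open>s \<le> t\<close>])
    fix \<tau> assume "s < \<tau>" "\<tau> < t"
    then have "0 < \<tau>" using assms by simp
    show "\<exists>D. ((\<lambda>s. (norm (u s))\<^sup>2) has_real_derivative D) (at_right \<tau>) \<and> D \<le> 0"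
      using norm_sq_flow_right_deriv[OF \<open>0 < \<tau>\<close>] inner_subgrad_flow_nonneg[OF \<open>0 < \<tau>\<close>]
      by (intro exI[of _ "- 2 * inner (subgrad \<tau>) (u \<tau>)"] conjI) simp_all
  qed
  then show ?thesis by (rule power2_le_imp_le) simp
qed

lemma inner_flow_null_set:
  assumes "v \<in> null_set J" "0 \<le> t"
  shows "inner (u t) v = inner f v"
proof -
  have cont: "continuous_on {0..t} u"
    using flow_continuous by (rule continuous_on_subset) auto
  have le: "inner (u t) w \<le> inner f w" if "w \<in> null_set J" for w
  proof -
    have "continuous_on {0..t} (\<lambda>s. inner (u s) w)"
      using cont by (intro continuous_intros)
    then have "inner (u t) w \<le> inner (u 0) w"
    proof (rule right_deriv_nonpos_imp_le[OF \<open>0 \<le> t\<close>, where g = "\<lambda>s. inner (u s) w"])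
      fix \<tau> :: real assume "0 < \<tau>"
      have "inner (subgrad \<tau>) w = 0"
        using J_convex J_homogeneous subgrad(1)[OF \<open>0 < \<tau>\<close>] J_flow_eq_energy[OF \<open>0 < \<tau>\<close>] that
        by (rule subdiff_orthogonal_null_set)
      then show "\<exists>D. ((\<lambda>s. inner (u s) w) has_real_derivative D) (at_right \<tau>) \<and> D \<le> 0"
        using inner_flow_right_deriv[OF \<open>0 < \<tau>\<close>, of w] by (intro exI[of _ 0] conjI) simp_all
    qed
    then show ?thesis by (simp add: flow_initial)
  qed
  have "- v \<in> null_set J"
    using assms(1) J_uminus[of v] by (simp add: null_set_def)
  then show ?thesis using le[OF assms(1)] le[of "- v"] by simp
qed

lemma flow_vanishes_after_extinction:
  assumes "extinction_time u \<le> ereal t"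
  shows "u t = 0"
proof -
  have "0 \<le> t" using order_trans[OF extinction_time_nonneg assms] by simp
  have after: "u s = 0" if "t < s" for s
  proof -
    have "extinction_time u < ereal s" using assms that by (simp add: le_less_trans)
    then obtain T where "0 < T" "\<forall>r\<ge>T. u r = 0" "T < s"
      unfolding extinction_time_def INF_less_iff by auto
    then show ?thesis using that by simp
  qed
  have "(u \<longlongrightarrow> u t) (at t within {0..})"
    using flow_continuous \<open>0 \<le> t\<close> by (simp add: continuous_on_def)
  then have "(u \<longlongrightarrow> u t) (at_right t)"
    by (rule tendsto_within_subset) (use \<open>0 \<le> t\<close> in auto)
  moreover have "(u \<longlongrightarrow> 0) (at_right t)"
    by (rule tendsto_eventually) (auto simp: eventually_at_right_field intro!: exI[of _ "t + 1"] after)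
  ultimately show ?thesis by (rule tendsto_unique[rotated]) simp
qed

lemma extinction_time_pos:
  assumes "f \<noteq> 0"
  shows "0 < extinction_time u"
  using flow_vanishes_after_extinction[of 0] flow_initial assms
  by (metis not_less zero_ereal_def)

lemma flow_nonzero_before_extinction:
  assumes "0 \<le> t" "ereal t < extinction_time u"
  shows "u t \<noteq> 0"
proof
  assume "u t = 0"
  then have zero: "u s = 0" if "t \<le> s" for s
    using norm_flow_antimono[OF assms(1) that] by simp
  have "extinction_time u \<le> ereal t + ereal e" if "0 < e" for e
    unfolding extinction_time_def using assms(1) that zero by (intro INF_lower2[of "t + e"]) auto
  then have "extinction_time u \<le> ereal t" by (rule ereal_le_epsilon2)
  with assms(2) show False by simp
qed

lemma flow_in_H0:
  assumes "f \<in> H0 J" "0 \<le> t" "ereal t < extinction_time u"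
  shows "u t \<in> H0 J"
  using assms inner_flow_null_set flow_nonzero_before_extinction by (auto simp: H0_def)

lemma rayleigh_flow:
  assumes "0 < t" "u t \<noteq> 0"
  shows "rayleigh p J (u t) = ereal (p * energy t / norm (u t) powr p)"
  using assms by (simp add: rayleigh_def J_flow_eq_energy)

lemma decay_right_deriv:
  assumes "0 < t" "u t \<noteq> 0"
  shows "((\<lambda>s. norm (u s) powr (2 - p) + (2 - p) * L * s) has_real_derivative
      (2 - p) * (L - p * energy t / norm (u t) powr p)) (at_right t)"
proof -
  have sq: "norm x powr (2 - p) = (norm x)\<^sup>2 powr ((2 - p) / 2)" for x :: 'a
    by (simp add: power2_powr_half)
  have "((\<lambda>s. (norm (u s))\<^sup>2) has_real_derivative - (2 * p * energy t)) (at_right t)"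
    using norm_sq_flow_right_deriv[OF assms(1)] inner_subgrad_flow[OF assms(1)] by (simp add: mult.assoc)
  from has_real_derivative_powr[THEN DERIV_chain2, OF _ this, of "(2 - p) / 2"]
  have "((\<lambda>s. norm (u s) powr (2 - p)) has_real_derivative
      (2 - p) / 2 * (norm (u t))\<^sup>2 powr ((2 - p) / 2 - 1) * - (2 * p * energy t)) (at_right t)"
    using assms(2) unfolding sq by simp
  moreover have "(norm (u t))\<^sup>2 powr ((2 - p) / 2 - 1) = 1 / norm (u t) powr p"
  proof -
    have "(2 - p) / 2 - 1 = - p / 2" by (simp add: field_simps)
    then have "(norm (u t))\<^sup>2 powr ((2 - p) / 2 - 1) = norm (u t) powr (- p)"
      by (simp only: power2_powr_half norm_ge_zero)
    also have "\<dots> = 1 / norm (u t) powr p"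
      by (simp add: powr_minus_divide)
    finally show ?thesis .
  qed
  ultimately have "((\<lambda>s. norm (u s) powr (2 - p)) has_real_derivative
      - ((2 - p) * (p * energy t / norm (u t) powr p))) (at_right t)"
    by simp
  moreover have "((\<lambda>s. (2 - p) * L * s) has_real_derivative (2 - p) * L) (at_right t)"
    by (auto intro!: derivative_eq_intros)
  ultimately show ?thesis
    by (rule DERIV_add[THEN DERIV_cong]) (simp add: algebra_simps)
qed

lemma decay_estimate:
  assumes "p < 2" "ereal L \<le> lambda1 p J" "f \<in> H0 J"
    and "0 \<le> s" "s \<le> t" "ereal t \<le> extinction_time u"
  shows "norm (u t) powr (2 - p) + (2 - p) * L * t \<le> norm (u s) powr (2 - p) + (2 - p) * L * s"
proof (rule right_deriv_nonpos_imp_le[OF \<open>s \<le> t\<close>])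
  have "continuous_on {s..t} u"
    using flow_continuous by (rule continuous_on_subset) (use assms(4) in auto)
  then show "continuous_on {s..t} (\<lambda>s. norm (u s) powr (2 - p) + (2 - p) * L * s)"
    using assms(1) by (intro continuous_intros continuous_on_powr') auto
  fix \<tau> assume "s < \<tau>" "\<tau> < t"
  then have "0 < \<tau>" "ereal \<tau> < extinction_time u"
    using assms(4) less_le_trans[OF _ assms(6), of "ereal \<tau>"] by auto
  then have "u \<tau> \<in> H0 J" "u \<tau> \<noteq> 0"
    using flow_in_H0[OF assms(3)] flow_nonzero_before_extinction by auto
  then have "L \<le> p * energy \<tau> / norm (u \<tau>) powr p"
    using order_trans[OF assms(2) lambda1_le_rayleigh[of "u \<tau>"]] rayleigh_flow[OF \<open>0 < \<tau>\<close>]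
    by simp
  then show "\<exists>D. ((\<lambda>s. norm (u s) powr (2 - p) + (2 - p) * L * s) has_real_derivative D)
      (at_right \<tau>) \<and> D \<le> 0"
    using decay_right_deriv[OF \<open>0 < \<tau>\<close> \<open>u \<tau> \<noteq> 0\<close>] assms(1)
    by (intro exI conjI) (auto simp: mult_nonneg_nonpos)
qed

lemma rayleigh_flow_eq_lambda1:
  assumes "p < 2" "lambda1 p J = ereal L" "f \<in> H0 J" "extinction_time u = ereal T"
    and "norm f powr (2 - p) \<le> (2 - p) * L * T" "0 < t" "t < T"
  shows "rayleigh p J (u t) = lambda1 p J"
proof -
  define \<psi> where "\<psi> s = norm (u s) powr (2 - p) + (2 - p) * L * s" for s
  have eq: "\<psi> s = \<psi> t" if "t \<le> s" "s \<le> T" for s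
  proof -
    have decay: "\<psi> b \<le> \<psi> a" if "0 \<le> a" "a \<le> b" "b \<le> T" for a b
      unfolding \<psi>_def using assms(1-4) that by (intro decay_estimate) auto
    have "\<psi> 0 \<le> \<psi> T"
      using assms(5) flow_initial flow_vanishes_after_extinction[of T] assms(4)
      by (simp add: \<psi>_def)
    then show ?thesis
      using decay[of 0 t] decay[of t s] decay[of s T] assms(6) that by linarith
  qed
  have const: "\<forall>\<^sub>F s in at_right t. \<psi> s = \<psi> t"
    unfolding eventually_at_right_field
  proof (intro exI[of _ T] conjI allI impI)
    fix s assume "t < s" "s < T"
    then show "\<psi> s = \<psi> t" by (intro eq) auto
  qed (fact assms(7))
  have "u t \<noteq> 0"
    using assms(4,6,7) flow_nonzero_before_extinction by simp
  then have "(\<psi> has_real_derivative (2 - p) * (L - p * energy t / norm (u t) powr p)) (at_right t)"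
    unfolding \<psi>_def[abs_def] using assms(6) by (rule decay_right_deriv[rotated])
  from right_deriv_eventually_const[OF this const]
  have "(2 - p) * (L - p * energy t / norm (u t) powr p) = 0" .
  then show ?thesis
    using assms(1,2) rayleigh_flow[OF assms(6) \<open>u t \<noteq> 0\<close>] by simp
qed

lemma rayleigh_initial_le:
  assumes "0 < p" "f \<noteq> 0" "\<forall>\<^sub>F t in at_right 0. rayleigh p J (u t) \<le> ereal L"
  shows "rayleigh p J f \<le> ereal L"
proof -
  have "(u \<longlongrightarrow> u 0) (at 0 within {0..})"
    using flow_continuous by (simp add: continuous_on_def)
  then have lim: "(u \<longlongrightarrow> f) (at_right 0)"
    unfolding flow_initial by (rule tendsto_within_subset) auto
  have "\<forall>\<^sub>F t in at_right 0. J (u t) \<le> ereal (L * norm (u t) powr p / p)"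
    using assms(3) eventually_at_right_less tendsto_imp_eventually_ne[OF lim assms(2)]
  proof eventually_elim
    case (elim t)
    then have "p * energy t / norm (u t) powr p \<le> L" using rayleigh_flow by simp
    moreover have "0 < norm (u t) powr p" using elim by simp
    ultimately have "energy t \<le> L * norm (u t) powr p / p"
      using assms(1) by (simp add: field_simps)
    then show ?case using J_flow_eq_energy elim by simp
  qed
  moreover have "((\<lambda>t. L * norm (u t) powr p / p) \<longlongrightarrow> L * norm f powr p / p) (at_right 0)"
    using assms(1,2) by (intro tendsto_intros lim) auto
  ultimately have "J f \<le> ereal (L * norm f powr p / p)"
    by (intro lsc_fun_le_limit[OF J_lsc _ lim]) auto
  moreover obtain j where "J f = ereal j"
    using calculation J_nonneg[of f] by (cases "J f") auto
  ultimately show ?thesis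
    using assms(1,2) by (simp add: rayleigh_def field_simps)
qed

end

theorem proposition6:
  fixes J :: "'a::{real_inner,complete_space} \<Rightarrow> ereal"
    and p :: real and f :: 'a and u :: "real \<Rightarrow> 'a"
  assumes hp: "1 \<le> p" "p < 2"
    and hJ: "admissible_J p J"
    and coercive: "lambda1 p J > 0"
    and hf: "f \<in> H0 J"
    and hu: "gradient_flow J f u"
    and hTex: "extinction_time u = ereal (norm f powr (2 - p)) / (ereal (2 - p) * lambda1 p J)"
    and profile: "\<exists>w_star tk.
        (\<forall>k. 0 \<le> tk k \<and> ereal (tk k) < extinction_time u) \<and> incseq tk \<and>
        (\<lambda>k. ereal (tk k)) \<longlonglongrightarrow> extinction_time u \<and>
        (\<lambda>k. (1 / (1 - tk k / real_of_ereal (extinction_time u)) powr (1 / (2 - p))) *\<^sub>R u (tk k))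
          \<longlonglongrightarrow> w_star"
  shows "(\<forall>t. 0 \<le> t \<and> ereal t < extinction_time u \<longrightarrow> rayleigh p J (u t) = lambda1 p J)
         \<and> ground_state p J f"
proof -
  interpret brezis_flow p J f u using hJ hu by unfold_locales
  have "f \<noteq> 0" using hf by (simp add: H0_def)
  then have pos: "0 < extinction_time u" by (rule extinction_time_pos)
  obtain L where L: "lambda1 p J = ereal L" "0 < L"
    using coercive pos hTex hp by (cases "lambda1 p J") auto
  define T where "T = norm f powr (2 - p) / ((2 - p) * L)"
  have ext: "extinction_time u = ereal T"
    using hTex L hp by (simp add: T_def)
  have rayleigh_eq: "rayleigh p J (u t) = lambda1 p J" if "0 < t" "t < T" for t
    using hp(2) L(1) hf ext _ that
    by (rule rayleigh_flow_eq_lambda1) (use L hp in \<open>simp add: T_def\<close>)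
  have "\<forall>\<^sub>F t in at_right 0. rayleigh p J (u t) \<le> ereal L"
    unfolding eventually_at_right_field using pos ext rayleigh_eq L(1) by (intro exI[of _ T]) auto
  then have "rayleigh p J f \<le> lambda1 p J"
    using hp(1) \<open>f \<noteq> 0\<close> L(1) rayleigh_initial_le by simp
  then have init: "rayleigh p J f = lambda1 p J"
    using lambda1_le_rayleigh[OF hf] by (rule antisym)
  show ?thesis
    using rayleigh_eq init flow_initial ext hf lambda1_le_rayleigh
    by (auto simp: ground_state_def le_less)
qed

end
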